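(* Let $(H,R)$ be a quasitriangular Hopf algebra. Then at least one of the following holds: (i) $|G(H^o)|=1$; (ii) $|G(H^o)|\neq1$ and $G(H^o)\cap Z(H^o)\neq\{1\}$; (iii) $|G(H^o)|\neq1$, $G(H^o)\cap Z(H^o)=\{1\}$, and the center $Z(G(H))$ of the group $G(H)$ is nontrivial.
   Context: Quasitriangular $(H,R)$: $R$ invertible with $(\Delta\otimes\mathrm{id})(R)=R_{13}R_{23}$, $(\mathrm{id}\otimes\Delta)(R)=R_{13}R_{12}$, $\tau\Delta(h)=R\Delta(h)R^{-1}$. $H^o$ is the finite dual Hopf algebra $\{f\in H^*\mid f$ vanishes on some finite-codimensional ideal$\}$. $G(B)$ denotes the group of group-like elements of a Hopf algebra $B$, $Z(B)$ its center. *)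

theory Defs
  imports Main "HOL.Vector_Spaces"
begin

text \<open>Tensors in H (x) H (resp. H (x) H (x) H) are represented as finite
formal sums, i.e. lists of pairs (resp. triples); two such representations denote the
same tensor iff all functionals f (x) g (resp. f (x) g (x) l) with f, g, l linear
agree on them (linear functionals separate points of tensor products of vector
spaces over a field).\<close>

definition lin :: "('k::field \<Rightarrow> 'h::ring_1 \<Rightarrow> 'h) \<Rightarrow> ('h \<Rightarrow> 'k) \<Rightarrow> bool" where
  "lin scale f \<longleftrightarrow> Vector_Spaces.linear scale (*) f"

definition ev2 :: "('h \<Rightarrow> 'k::field) \<Rightarrow> ('h \<Rightarrow> 'k) \<Rightarrow> ('h \<times> 'h) list \<Rightarrow> 'k" where
  "ev2 f g T = sum_list (map (\<lambda>(a, b). f a * g b) T)"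

definition ev3 :: "('h \<Rightarrow> 'k::field) \<Rightarrow> ('h \<Rightarrow> 'k) \<Rightarrow> ('h \<Rightarrow> 'k) \<Rightarrow> ('h \<times> 'h \<times> 'h) list \<Rightarrow> 'k" where
  "ev3 f g l U = sum_list (map (\<lambda>(a, b, c). f a * g b * l c) U)"

definition teq2 :: "('k::field \<Rightarrow> 'h::ring_1 \<Rightarrow> 'h) \<Rightarrow> ('h \<times> 'h) list \<Rightarrow> ('h \<times> 'h) list \<Rightarrow> bool" where
  "teq2 scale T S \<longleftrightarrow> (\<forall>f g. lin scale f \<and> lin scale g \<longrightarrow> ev2 f g T = ev2 f g S)"

definition teq3 :: "('k::field \<Rightarrow> 'h::ring_1 \<Rightarrow> 'h) \<Rightarrow> ('h \<times> 'h \<times> 'h) list \<Rightarrow> ('h \<times> 'h \<times> 'h) list \<Rightarrow> bool" where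
  "teq3 scale T S \<longleftrightarrow> (\<forall>f g l. lin scale f \<and> lin scale g \<and> lin scale l \<longrightarrow> ev3 f g l T = ev3 f g l S)"

definition tmul2 :: "('h::ring_1 \<times> 'h) list \<Rightarrow> ('h \<times> 'h) list \<Rightarrow> ('h \<times> 'h) list" where
  "tmul2 T S = concat (map (\<lambda>(a, b). map (\<lambda>(c, d). (a * c, b * d)) S) T)"

definition tmul3 :: "('h::ring_1 \<times> 'h \<times> 'h) list \<Rightarrow> ('h \<times> 'h \<times> 'h) list \<Rightarrow> ('h \<times> 'h \<times> 'h) list" where
  "tmul3 T S = concat (map (\<lambda>(a, b, c). map (\<lambda>(x, y, z). (a * x, b * y, c * z)) S) T)"

definition delta_id :: "('h \<Rightarrow> ('h \<times> 'h) list) \<Rightarrow> ('h \<times> 'h) list \<Rightarrow> ('h \<times> 'h \<times> 'h) list" where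
  "delta_id \<Delta> T = concat (map (\<lambda>(a, b). map (\<lambda>(x, y). (x, y, b)) (\<Delta> a)) T)"

definition id_delta :: "('h \<Rightarrow> ('h \<times> 'h) list) \<Rightarrow> ('h \<times> 'h) list \<Rightarrow> ('h \<times> 'h \<times> 'h) list" where
  "id_delta \<Delta> T = concat (map (\<lambda>(a, b). map (\<lambda>(x, y). (a, x, y)) (\<Delta> b)) T)"

definition hopf_algebra ::
  "('k::field \<Rightarrow> 'h::ring_1 \<Rightarrow> 'h) \<Rightarrow> ('h \<Rightarrow> ('h \<times> 'h) list) \<Rightarrow> ('h \<Rightarrow> 'k) \<Rightarrow> ('h \<Rightarrow> 'h) \<Rightarrow> bool" where
  "hopf_algebra scale \<Delta> \<epsilon> S \<longleftrightarrow>
     \<comment> \<open>associative unital k-algebra\<close>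
     Vector_Spaces.vector_space scale \<and>
     (\<forall>c x y. scale c (x * y) = scale c x * y \<and> scale c (x * y) = x * scale c y) \<and>
     \<comment> \<open>Delta is a linear, unital, multiplicative map H \<rightarrow> H (x) H\<close>
     (\<forall>x y. teq2 scale (\<Delta> (x + y)) (\<Delta> x @ \<Delta> y)) \<and>
     (\<forall>c x. teq2 scale (\<Delta> (scale c x)) (map (\<lambda>(a, b). (scale c a, b)) (\<Delta> x))) \<and>
     (\<forall>x y. teq2 scale (\<Delta> (x * y)) (tmul2 (\<Delta> x) (\<Delta> y))) \<and>
     teq2 scale (\<Delta> 1) [(1, 1)] \<and>
     \<comment> \<open>coassociativity\<close>
     (\<forall>h. teq3 scale (delta_id \<Delta> (\<Delta> h)) (id_delta \<Delta> (\<Delta> h))) \<and>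
     \<comment> \<open>counit: a linear algebra map H \<rightarrow> k\<close>
     lin scale \<epsilon> \<and> (\<forall>x y. \<epsilon> (x * y) = \<epsilon> x * \<epsilon> y) \<and> \<epsilon> 1 = 1 \<and>
     (\<forall>h. sum_list (map (\<lambda>(a, b). scale (\<epsilon> a) b) (\<Delta> h)) = h) \<and>
     (\<forall>h. sum_list (map (\<lambda>(a, b). scale (\<epsilon> b) a) (\<Delta> h)) = h) \<and>
     \<comment> \<open>antipode: a linear map with the antipode identities\<close>
     Vector_Spaces.linear scale scale S \<and>
     (\<forall>h. sum_list (map (\<lambda>(a, b). S a * b) (\<Delta> h)) = scale (\<epsilon> h) 1) \<and>
     (\<forall>h. sum_list (map (\<lambda>(a, b). a * S b) (\<Delta> h)) = scale (\<epsilon> h) 1)"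

definition quasitriangular ::
  "('k::field \<Rightarrow> 'h::ring_1 \<Rightarrow> 'h) \<Rightarrow> ('h \<Rightarrow> ('h \<times> 'h) list) \<Rightarrow> ('h \<times> 'h) list \<Rightarrow> bool" where
  "quasitriangular scale \<Delta> R \<longleftrightarrow>
     (\<exists>Rinv. teq2 scale (tmul2 R Rinv) [(1, 1)] \<and> teq2 scale (tmul2 Rinv R) [(1, 1)] \<and>
        (\<forall>h. teq2 scale (map (\<lambda>(a, b). (b, a)) (\<Delta> h)) (tmul2 (tmul2 R (\<Delta> h)) Rinv))) \<and>
     teq3 scale (delta_id \<Delta> R)
       (tmul3 (map (\<lambda>(a, b). (a, 1, b)) R) (map (\<lambda>(a, b). (1, a, b)) R)) \<and>
     teq3 scale (id_delta \<Delta> R)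
       (tmul3 (map (\<lambda>(a, b). (a, 1, b)) R) (map (\<lambda>(a, b). (a, b, 1)) R))"

definition grouplikes :: "('k::field \<Rightarrow> 'h::ring_1 \<Rightarrow> 'h) \<Rightarrow> ('h \<Rightarrow> ('h \<times> 'h) list) \<Rightarrow> 'h set" where
  "grouplikes scale \<Delta> = {g. g \<noteq> 0 \<and> teq2 scale (\<Delta> g) [(g, g)]}"

definition grouplikes_center :: "('k::field \<Rightarrow> 'h::ring_1 \<Rightarrow> 'h) \<Rightarrow> ('h \<Rightarrow> ('h \<times> 'h) list) \<Rightarrow> 'h set" where
  "grouplikes_center scale \<Delta> =
     {g \<in> grouplikes scale \<Delta>. \<forall>x \<in> grouplikes scale \<Delta>. g * x = x * g}"

definition fin_codim_ideal :: "('k::field \<Rightarrow> 'h::ring_1 \<Rightarrow> 'h) \<Rightarrow> 'h set \<Rightarrow> bool" where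
  "fin_codim_ideal scale I \<longleftrightarrow>
     module.subspace scale I \<and> (\<forall>x \<in> I. \<forall>h. h * x \<in> I \<and> x * h \<in> I) \<and>
     (\<exists>B. finite B \<and> (\<forall>h. \<exists>v \<in> module.span scale B. h - v \<in> I))"

definition finite_dual :: "('k::field \<Rightarrow> 'h::ring_1 \<Rightarrow> 'h) \<Rightarrow> ('h \<Rightarrow> 'k) set" where
  "finite_dual scale =
     {f. lin scale f \<and> (\<exists>I. fin_codim_ideal scale I \<and> (\<forall>x \<in> I. f x = 0))}"

definition conv :: "('h \<Rightarrow> ('h \<times> 'h) list) \<Rightarrow> ('h \<Rightarrow> 'k::field) \<Rightarrow> ('h \<Rightarrow> 'k) \<Rightarrow> ('h \<Rightarrow> 'k)" where
  "conv \<Delta> f g = (\<lambda>h. ev2 f g (\<Delta> h))"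

text \<open>Group-like elements of H^o: f \<noteq> 0 with Delta^o(f) = f (x) f, where
Delta^o(f)(x (x) y) = f(x y); i.e. f(x y) = f x * f y.\<close>
definition dual_grouplikes :: "('k::field \<Rightarrow> 'h::ring_1 \<Rightarrow> 'h) \<Rightarrow> ('h \<Rightarrow> 'k) set" where
  "dual_grouplikes scale =
     {f \<in> finite_dual scale. f \<noteq> (\<lambda>_. 0) \<and> (\<forall>x y. f (x * y) = f x * f y)}"

definition dual_center :: "('k::field \<Rightarrow> 'h::ring_1 \<Rightarrow> 'h) \<Rightarrow> ('h \<Rightarrow> ('h \<times> 'h) list) \<Rightarrow> ('h \<Rightarrow> 'k) set" where
  "dual_center scale \<Delta> =
     {f \<in> finite_dual scale. \<forall>g \<in> finite_dual scale. conv \<Delta> f g = conv \<Delta> g f}"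

end

theory Submission
  imports Defs
begin

text \<open>Suppose \<open>|G(H\<^sup>o)| \<noteq> 1\<close> and \<open>G(H\<^sup>o) \<inter> Z(H\<^sup>o) = {\<epsilon>}\<close>, and pick a group-like
  \<open>\<alpha> \<noteq> \<epsilon>\<close> of \<open>H\<^sup>o\<close>, i.e. an algebra map \<open>H \<rightarrow> k\<close>. Applying \<open>\<alpha> \<otimes> id\<close> to the
  axioms of \<open>R\<close> shows that \<open>u = (\<alpha> \<otimes> id)(R)\<close> is a group-like element of \<open>H\<close>
  (by \<open>(id \<otimes> \<Delta>)(R) = R\<^sub>1\<^sub>3R\<^sub>1\<^sub>2\<close>), that it commutes with every group-like \<open>x\<close>
  (apply \<open>\<alpha> \<otimes> id\<close> to \<open>\<tau>\<Delta>(x) R = R \<Delta>(x)\<close> and cancel \<open>\<alpha>(x) \<noteq> 0\<close>), and that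
  \<open>u = 1\<close> would make \<open>\<alpha>\<close> central in \<open>H\<^sup>o\<close> (apply \<open>\<alpha> \<otimes> g\<close> to \<open>\<tau>\<Delta>(h) R = R \<Delta>(h)\<close>).
  Hence \<open>u\<close> is a nontrivial element of \<open>Z(G(H))\<close>.\<close>

definition k_algebra :: "('k::field \<Rightarrow> 'h::ring_1 \<Rightarrow> 'h) \<Rightarrow> bool" where
  "k_algebra scale \<longleftrightarrow> vector_space scale \<and>
     (\<forall>c x y. scale c x * y = scale c (x * y) \<and> x * scale c y = scale c (x * y))"

definition character :: "('k::field \<Rightarrow> 'h::ring_1 \<Rightarrow> 'h) \<Rightarrow> ('h \<Rightarrow> 'k) \<Rightarrow> bool" where
  "character scale \<alpha> \<longleftrightarrow> lin scale \<alpha> \<and> (\<forall>x y. \<alpha> (x * y) = \<alpha> x * \<alpha> y) \<and> \<alpha> 1 = 1"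

definition left_slice :: "('k::field \<Rightarrow> 'h::ring_1 \<Rightarrow> 'h) \<Rightarrow> ('h \<Rightarrow> 'k) \<Rightarrow> ('h \<times> 'h) list \<Rightarrow> 'h" where
  "left_slice scale \<alpha> R = (\<Sum>t\<leftarrow>R. scale (\<alpha> (fst t)) (snd t))"

lemma lin_imp_vector_space: "lin scale f \<Longrightarrow> vector_space scale"
  unfolding lin_def linear_iff by blast

lemma lin_add: "lin scale f \<Longrightarrow> f (x + y) = f x + f y"
  unfolding lin_def linear_iff by blast

lemma lin_scale: "lin scale f \<Longrightarrow> f (scale c x) = c * f x"
  unfolding lin_def linear_iff by blast

lemma lin_zero:
  assumes "lin scale f"
  shows "f 0 = 0"
proof -
  interpret vector_space scale using lin_imp_vector_space[OF assms] .
  show ?thesis using lin_scale[OF assms, of 0 0] by simp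
qed

lemma lin_diff:
  assumes "lin scale f"
  shows "f (x - y) = f x - f y"
  using lin_add[OF assms, of "x - y" y] by (simp add: algebra_simps)

lemma lin_sum_list: "lin scale f \<Longrightarrow> f (\<Sum>x\<leftarrow>xs. h x) = (\<Sum>x\<leftarrow>xs. f (h x))"
  by (induction xs) (auto simp: lin_add lin_zero)

lemma lin_compose_linear:
  assumes "Vector_Spaces.linear scale scale S" and "lin scale f"
  shows "lin scale (f \<circ> S)"
  using Vector_Spaces.linear_compose assms unfolding lin_def by blast

lemma vector_space_field_mult: "vector_space ((*) :: 'k::field \<Rightarrow> 'k \<Rightarrow> 'k)"
  by unfold_locales (simp_all add: algebra_simps)

lemma exists_lin_eq_one:
  fixes scale :: "'k::field \<Rightarrow> 'h::ring_1 \<Rightarrow> 'h"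
  assumes "vector_space scale" and "a \<noteq> 0"
  shows "\<exists>g. lin scale g \<and> g a = 1"
proof -
  interpret vs: vector_space scale by fact
  interpret vector_space_pair scale "(*) :: 'k \<Rightarrow> 'k \<Rightarrow> 'k"
    using assms(1) vector_space_field_mult by (simp add: vector_space_pair_def)
  have ind: "vs.independent {a}"
    using vs.independent_insertI[of a "{}"] assms(2) by simp
  show ?thesis
    using linear_construct[OF ind] construct_basis[OF ind, of a "\<lambda>_. 1"]
    unfolding lin_def by blast
qed

lemma lin_separates_points:
  fixes scale :: "'k::field \<Rightarrow> 'h::ring_1 \<Rightarrow> 'h"
  assumes "vector_space scale" and "\<And>g. lin scale g \<Longrightarrow> g a = g b"
  shows "a = b"
proof (rule ccontr)
  assume "a \<noteq> b"
  then obtain g where g: "lin scale g" "g (a - b) = 1"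
    using exists_lin_eq_one[OF assms(1), of "a - b"] by auto
  then show False using assms(2)[OF g(1)] lin_diff[OF g(1), of a b] by simp
qed

lemma ev2_eq_sum_list: "ev2 f g T = (\<Sum>t\<leftarrow>T. f (fst t) * g (snd t))"
  unfolding ev2_def by (induction T) auto

lemma ev3_eq_sum_list: "ev3 f g l T = (\<Sum>t\<leftarrow>T. f (fst t) * g (fst (snd t)) * l (snd (snd t)))"
  unfolding ev3_def by (induction T) auto

lemma sum_list_tmul2:
  "(\<Sum>x\<leftarrow>tmul2 T S. F x) = (\<Sum>t\<leftarrow>T. \<Sum>s\<leftarrow>S. F (fst t * fst s, snd t * snd s))"
  unfolding tmul2_def by (induction T) (auto simp: case_prod_beta comp_def)

lemma sum_list_tmul3:
  "(\<Sum>x\<leftarrow>tmul3 T S. F x) =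
     (\<Sum>t\<leftarrow>T. \<Sum>s\<leftarrow>S. F (fst t * fst s, fst (snd t) * fst (snd s), snd (snd t) * snd (snd s)))"
  unfolding tmul3_def by (induction T) (auto simp: case_prod_beta comp_def)

lemma sum_list_id_delta:
  "(\<Sum>x\<leftarrow>id_delta D T. F x) = (\<Sum>t\<leftarrow>T. \<Sum>s\<leftarrow>D (snd t). F (fst t, fst s, snd s))"
  unfolding id_delta_def by (induction T) (auto simp: case_prod_beta comp_def)

lemma sum_list_swap:
  "(\<Sum>x\<leftarrow>xs. \<Sum>y\<leftarrow>ys. F x y) = (\<Sum>y\<leftarrow>ys. \<Sum>x\<leftarrow>xs. (F x y :: 'a::comm_monoid_add))"
  by (induction xs) (auto simp: sum_list_addf)

lemma ev2_flip: "ev2 f g (map (\<lambda>(a, b). (b, a)) T) = ev2 g f T"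
  unfolding ev2_eq_sum_list by (induction T) (auto simp: mult.commute)

lemma ev2_tmul2_assoc: "ev2 f g (tmul2 (tmul2 A B) C) = ev2 f g (tmul2 A (tmul2 B C))"
  unfolding ev2_eq_sum_list sum_list_tmul2 by (simp add: mult.assoc)

lemma tmul2_unit_right: "tmul2 T [(1, 1)] = T"
  unfolding tmul2_def by (induction T) auto

lemma ev2_tmul2_mult:
  assumes "\<forall>x y. \<alpha> (x * y) = \<alpha> x * \<alpha> y" and "\<forall>x y. \<beta> (x * y) = \<beta> x * \<beta> y"
  shows "ev2 \<alpha> \<beta> (tmul2 T S) = ev2 \<alpha> \<beta> T * (ev2 \<alpha> \<beta> S :: 'k::field)"
  unfolding ev2_eq_sum_list sum_list_tmul2
  by (simp add: assms sum_list_const_mult[symmetric] sum_list_mult_const[symmetric] mult_ac)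

lemma lin_mult_const:
  assumes A: "k_algebra scale" and f: "lin scale f"
  shows "lin scale (\<lambda>a. f (s * a))" "lin scale (\<lambda>a. f (a * s))"
proof -
  have VS: "vector_space scale" and sc: "\<And>c x y. scale c x * y = scale c (x * y)"
    "\<And>c x y. x * scale c y = scale c (x * y)"
    using A unfolding k_algebra_def by blast+
  show "lin scale (\<lambda>a. f (s * a))" "lin scale (\<lambda>a. f (a * s))"
    unfolding lin_def linear_iff
    using VS vector_space_field_mult lin_add[OF f] lin_scale[OF f] sc
    by (simp_all add: distrib_left distrib_right)
qed

lemma teq2_tmul2:
  assumes "k_algebra scale" and "lin scale f" and "lin scale g" and "teq2 scale T T'"
  shows "ev2 f g (tmul2 S T) = ev2 f g (tmul2 S T')"
    and "ev2 f g (tmul2 T S) = ev2 f g (tmul2 T' S)"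
proof -
  have left: "ev2 f g (tmul2 S X) = (\<Sum>s\<leftarrow>S. ev2 (\<lambda>a. f (fst s * a)) (\<lambda>b. g (snd s * b)) X)" for X
    unfolding ev2_eq_sum_list sum_list_tmul2 fst_conv snd_conv ..
  have right: "ev2 f g (tmul2 X S) = (\<Sum>s\<leftarrow>S. ev2 (\<lambda>a. f (a * fst s)) (\<lambda>b. g (b * snd s)) X)" for X
    unfolding ev2_eq_sum_list sum_list_tmul2 fst_conv snd_conv by (rule sum_list_swap)
  show "ev2 f g (tmul2 S T) = ev2 f g (tmul2 S T')" "ev2 f g (tmul2 T S) = ev2 f g (tmul2 T' S)"
    unfolding left right using assms(4) lin_mult_const[OF assms(1,2)] lin_mult_const[OF assms(1,3)]
    unfolding teq2_def by simp_all
qed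

lemma quasitriangular_flip_commutes:
  assumes "quasitriangular scale \<Delta> R" and "k_algebra scale" and "lin scale f" and "lin scale g"
  shows "ev2 f g (tmul2 (map (\<lambda>(a, b). (b, a)) (\<Delta> h)) R) = ev2 f g (tmul2 R (\<Delta> h))"
proof -
  obtain Rinv where inv: "teq2 scale (tmul2 Rinv R) [(1, 1)]"
    and flip: "teq2 scale (map (\<lambda>(a, b). (b, a)) (\<Delta> h)) (tmul2 (tmul2 R (\<Delta> h)) Rinv)"
    using assms(1) unfolding quasitriangular_def by blast
  have "ev2 f g (tmul2 (map (\<lambda>(a, b). (b, a)) (\<Delta> h)) R)
      = ev2 f g (tmul2 (tmul2 (tmul2 R (\<Delta> h)) Rinv) R)"
    using teq2_tmul2(2)[OF assms(2-4) flip] .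
  also have "\<dots> = ev2 f g (tmul2 (tmul2 R (\<Delta> h)) (tmul2 Rinv R))"
    by (rule ev2_tmul2_assoc)
  also have "\<dots> = ev2 f g (tmul2 (tmul2 R (\<Delta> h)) [(1, 1)])"
    using teq2_tmul2(1)[OF assms(2-4) inv] .
  finally show ?thesis by (simp add: tmul2_unit_right)
qed

lemma lin_left_slice: "lin scale f \<Longrightarrow> f (left_slice scale \<alpha> R) = ev2 \<alpha> f R"
  unfolding left_slice_def ev2_eq_sum_list by (simp add: lin_sum_list lin_scale)

lemma lin_mult_left_slice:
  assumes "k_algebra scale" and "lin scale f"
  shows "f (x * left_slice scale \<alpha> R) = (\<Sum>t\<leftarrow>R. \<alpha> (fst t) * f (x * snd t))"
    and "f (left_slice scale \<alpha> R * x) = (\<Sum>t\<leftarrow>R. \<alpha> (fst t) * f (snd t * x))"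
proof -
  have sc: "scale c a * b = scale c (a * b)" "a * scale c b = scale c (a * b)" for c a b
    using assms(1) unfolding k_algebra_def by blast+
  have "x * left_slice scale \<alpha> R = (\<Sum>t\<leftarrow>R. scale (\<alpha> (fst t)) (x * snd t))"
    "left_slice scale \<alpha> R * x = (\<Sum>t\<leftarrow>R. scale (\<alpha> (fst t)) (snd t * x))"
    unfolding left_slice_def by (induction R) (simp_all add: distrib_left distrib_right sc)
  then show "f (x * left_slice scale \<alpha> R) = (\<Sum>t\<leftarrow>R. \<alpha> (fst t) * f (x * snd t))"
    and "f (left_slice scale \<alpha> R * x) = (\<Sum>t\<leftarrow>R. \<alpha> (fst t) * f (snd t * x))"
    by (simp_all add: lin_sum_list[OF assms(2)] lin_scale[OF assms(2)] comp_def)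
qed

lemma ev2_tmul2_left_slice:
  assumes "k_algebra scale" and "lin scale g" and "\<forall>x y. \<alpha> (x * y) = \<alpha> x * \<alpha> y"
  shows "ev2 \<alpha> g (tmul2 Y R) = (\<Sum>y\<leftarrow>Y. \<alpha> (fst y) * g (snd y * left_slice scale \<alpha> R))"
    and "ev2 \<alpha> g (tmul2 R Y) = (\<Sum>y\<leftarrow>Y. \<alpha> (fst y) * g (left_slice scale \<alpha> R * snd y))"
proof -
  show "ev2 \<alpha> g (tmul2 Y R) = (\<Sum>y\<leftarrow>Y. \<alpha> (fst y) * g (snd y * left_slice scale \<alpha> R))"
    unfolding ev2_eq_sum_list sum_list_tmul2 lin_mult_left_slice(1)[OF assms(1,2)]
    by (simp add: assms(3) sum_list_const_mult[symmetric] mult.assoc)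
  have "ev2 \<alpha> g (tmul2 R Y) = (\<Sum>y\<leftarrow>Y. \<Sum>t\<leftarrow>R. \<alpha> (fst t * fst y) * g (snd t * snd y))"
    unfolding ev2_eq_sum_list sum_list_tmul2 fst_conv snd_conv by (rule sum_list_swap)
  then show "ev2 \<alpha> g (tmul2 R Y) = (\<Sum>y\<leftarrow>Y. \<alpha> (fst y) * g (left_slice scale \<alpha> R * snd y))"
    unfolding lin_mult_left_slice(2)[OF assms(1,2)]
    by (simp add: assms(3) sum_list_const_mult[symmetric] mult.assoc mult.left_commute)
qed

lemma hopf_algebra_k_algebra: "hopf_algebra scale \<Delta> \<epsilon> S \<Longrightarrow> k_algebra scale"
  unfolding hopf_algebra_def k_algebra_def by metis

lemma hopf_algebra_counit_character: "hopf_algebra scale \<Delta> \<epsilon> S \<Longrightarrow> character scale \<epsilon>"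
  unfolding hopf_algebra_def character_def by blast

lemma ev2_Delta_left_slice:
  assumes "hopf_algebra scale \<Delta> \<epsilon> S" and "lin scale f" and "lin scale g"
  shows "ev2 f g (\<Delta> (left_slice scale \<alpha> R)) = (\<Sum>t\<leftarrow>R. \<alpha> (fst t) * ev2 f g (\<Delta> (snd t)))"
proof -
  have add: "ev2 f g (\<Delta> (x + y)) = ev2 f g (\<Delta> x) + ev2 f g (\<Delta> y)" for x y
    using assms unfolding hopf_algebra_def teq2_def by (simp add: ev2_eq_sum_list)
  have "ev2 f g (\<Delta> (scale c x)) = ev2 f g (map (\<lambda>(a, b). (scale c a, b)) (\<Delta> x))" for c x
    using assms unfolding hopf_algebra_def teq2_def by blast
  then have sc: "ev2 f g (\<Delta> (scale c x)) = c * ev2 f g (\<Delta> x)" for c x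
    unfolding ev2_eq_sum_list
    by (simp add: case_prod_beta comp_def lin_scale[OF assms(2)] sum_list_const_mult[symmetric] mult.assoc)
  interpret vector_space scale using lin_imp_vector_space[OF assms(2)] .
  have "ev2 f g (\<Delta> 0) = 0" using sc[of 0 0] by simp
  then show ?thesis unfolding left_slice_def by (induction R) (simp_all add: add sc)
qed

lemma hopf_algebra_counit_grouplike:
  assumes H: "hopf_algebra scale \<Delta> \<epsilon> S" and x: "x \<in> grouplikes scale \<Delta>"
  shows "\<epsilon> x = 1"
proof -
  have VS: "vector_space scale" and \<epsilon>: "lin scale \<epsilon>"
    and counit: "sum_list (map (\<lambda>(a, b). scale (\<epsilon> a) b) (\<Delta> x)) = x"
    using H unfolding hopf_algebra_def by blast+
  obtain f where f: "lin scale f" "f x = 1"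
    using exists_lin_eq_one[OF VS] x unfolding grouplikes_def by blast
  have "f x = ev2 \<epsilon> f (\<Delta> x)"
    using arg_cong[OF counit, of f] unfolding ev2_eq_sum_list
    by (simp add: lin_sum_list[OF f(1)] lin_scale[OF f(1)] case_prod_beta comp_def)
  also have "\<dots> = \<epsilon> x * f x"
    using x \<epsilon> f(1) unfolding grouplikes_def teq2_def ev2_eq_sum_list by simp
  finally show ?thesis using f(2) by simp
qed

text \<open>A character is invertible on group-likes: \<open>\<alpha>(S x) \<alpha>(x) = \<epsilon>(x) = 1\<close>, obtained by
  applying \<open>\<alpha>\<close> to the antipode identity \<open>\<Sum> S(x\<^sub>1) x\<^sub>2 = \<epsilon>(x) 1\<close> and using the linear
  functionals \<open>\<alpha> \<circ> S\<close> and \<open>\<alpha>\<close> to evaluate \<open>\<Delta>(x) = x \<otimes> x\<close>.\<close>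
lemma character_grouplike_nonzero:
  assumes H: "hopf_algebra scale \<Delta> \<epsilon> S" and \<alpha>: "character scale \<alpha>"
    and x: "x \<in> grouplikes scale \<Delta>"
  shows "\<alpha> x \<noteq> 0"
proof -
  have \<alpha>lin: "lin scale \<alpha>" and \<alpha>mult: "\<And>a b. \<alpha> (a * b) = \<alpha> a * \<alpha> b" and \<alpha>1: "\<alpha> 1 = 1"
    using \<alpha> unfolding character_def by blast+
  have antipode: "sum_list (map (\<lambda>(a, b). S a * b) (\<Delta> x)) = scale (\<epsilon> x) 1"
    and S: "Vector_Spaces.linear scale scale S"
    using H unfolding hopf_algebra_def by blast+
  have "\<epsilon> x = \<alpha> (sum_list (map (\<lambda>(a, b). S a * b) (\<Delta> x)))"
    unfolding antipode by (simp add: lin_scale[OF \<alpha>lin] \<alpha>1)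
  also have "\<dots> = ev2 (\<alpha> \<circ> S) \<alpha> (\<Delta> x)"
    unfolding ev2_eq_sum_list by (simp add: lin_sum_list[OF \<alpha>lin] \<alpha>mult case_prod_beta comp_def)
  also have "\<dots> = ev2 (\<alpha> \<circ> S) \<alpha> [(x, x)]"
    using x lin_compose_linear[OF S \<alpha>lin] \<alpha>lin unfolding grouplikes_def teq2_def by blast
  also have "\<dots> = \<alpha> (S x) * \<alpha> x"
    by (simp add: ev2_eq_sum_list)
  finally show ?thesis using hopf_algebra_counit_grouplike[OF H x] by auto
qed

subsection \<open>The central group-like element \<open>(\<alpha> \<otimes> id)(R)\<close>\<close>

lemma left_slice_nonzero:
  assumes H: "hopf_algebra scale \<Delta> \<epsilon> S" and QT: "quasitriangular scale \<Delta> R"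
    and \<alpha>: "character scale \<alpha>"
  shows "left_slice scale \<alpha> R \<noteq> 0"
proof
  assume "left_slice scale \<alpha> R = 0"
  have \<epsilon>: "character scale \<epsilon>" by (rule hopf_algebra_counit_character[OF H])
  obtain Rinv where Rinv: "teq2 scale (tmul2 R Rinv) [(1, 1)]"
    using QT unfolding quasitriangular_def by blast
  have \<epsilon>lin: "lin scale \<epsilon>" using \<epsilon> unfolding character_def by blast
  have "ev2 \<alpha> \<epsilon> R = 0"
    using lin_left_slice[OF \<epsilon>lin, of \<alpha> R] \<open>left_slice scale \<alpha> R = 0\<close> lin_zero[OF \<epsilon>lin] by simp
  moreover have "ev2 \<alpha> \<epsilon> (tmul2 R Rinv) = 1"
    using Rinv \<alpha> \<epsilon> unfolding teq2_def ev2_eq_sum_list character_def by simp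
  ultimately show False
    using ev2_tmul2_mult[of \<alpha> \<epsilon> R Rinv] \<alpha> \<epsilon> unfolding character_def by simp
qed

lemma left_slice_grouplike:
  assumes H: "hopf_algebra scale \<Delta> \<epsilon> S" and QT: "quasitriangular scale \<Delta> R"
    and \<alpha>: "character scale \<alpha>"
  shows "left_slice scale \<alpha> R \<in> grouplikes scale \<Delta>"
proof -
  let ?u = "left_slice scale \<alpha> R"
  have \<alpha>lin: "lin scale \<alpha>" and \<alpha>mult: "\<forall>x y. \<alpha> (x * y) = \<alpha> x * \<alpha> y"
    using \<alpha> unfolding character_def by blast+
  have qt: "teq3 scale (id_delta \<Delta> R)
      (tmul3 (map (\<lambda>(a, b). (a, 1, b)) R) (map (\<lambda>(a, b). (a, b, 1)) R))"
    using QT unfolding quasitriangular_def by blast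
  have "ev2 f g (\<Delta> ?u) = ev2 f g [(?u, ?u)]" if f: "lin scale f" and g: "lin scale g" for f g
  proof -
    have "ev2 f g (\<Delta> ?u) = (\<Sum>t\<leftarrow>R. \<alpha> (fst t) * ev2 f g (\<Delta> (snd t)))"
      by (rule ev2_Delta_left_slice[OF H f g])
    also have "\<dots> = ev3 \<alpha> f g (id_delta \<Delta> R)"
      unfolding ev3_eq_sum_list sum_list_id_delta ev2_eq_sum_list
      by (simp add: sum_list_const_mult[symmetric] mult.assoc)
    also have "\<dots> = ev3 \<alpha> f g (tmul3 (map (\<lambda>(a, b). (a, 1, b)) R) (map (\<lambda>(a, b). (a, b, 1)) R))"
      using qt \<alpha>lin f g unfolding teq3_def by blast
    also have "\<dots> = ev2 \<alpha> g R * ev2 \<alpha> f R"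
      unfolding ev3_eq_sum_list sum_list_tmul3 ev2_eq_sum_list
      by (simp add: case_prod_beta comp_def \<alpha>mult sum_list_const_mult[symmetric]
          sum_list_mult_const[symmetric] mult_ac)
    also have "\<dots> = ev2 f g [(?u, ?u)]"
      by (simp add: lin_left_slice[OF f] lin_left_slice[OF g] ev2_eq_sum_list mult.commute)
    finally show ?thesis .
  qed
  then show ?thesis
    using left_slice_nonzero[OF H QT \<alpha>] unfolding grouplikes_def teq2_def by blast
qed

lemma left_slice_commutes_grouplikes:
  assumes H: "hopf_algebra scale \<Delta> \<epsilon> S" and QT: "quasitriangular scale \<Delta> R"
    and \<alpha>: "character scale \<alpha>" and x: "x \<in> grouplikes scale \<Delta>"
  shows "left_slice scale \<alpha> R * x = x * left_slice scale \<alpha> R"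
proof -
  let ?u = "left_slice scale \<alpha> R"
  have A: "k_algebra scale" by (rule hopf_algebra_k_algebra[OF H])
  have \<alpha>lin: "lin scale \<alpha>" and \<alpha>mult: "\<forall>x y. \<alpha> (x * y) = \<alpha> x * \<alpha> y"
    using \<alpha> unfolding character_def by blast+
  have \<Delta>x: "teq2 scale (\<Delta> x) [(x, x)]"
    using x unfolding grouplikes_def by blast
  then have flip\<Delta>x: "teq2 scale (map (\<lambda>(a, b). (b, a)) (\<Delta> x)) [(x, x)]"
    unfolding teq2_def ev2_flip
  proof (intro allI impI)
    fix f g assume "lin scale f \<and> lin scale g"
    then have "ev2 g f (\<Delta> x) = ev2 g f [(x, x)]" using \<Delta>x unfolding teq2_def by blast
    then show "ev2 g f (\<Delta> x) = ev2 f g [(x, x)]" by (simp add: ev2_eq_sum_list mult.commute)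
  qed
  have "f (?u * x) = f (x * ?u)" if f: "lin scale f" for f
  proof -
    have "ev2 \<alpha> f (tmul2 [(x, x)] R) = ev2 \<alpha> f (tmul2 R [(x, x)])"
      using quasitriangular_flip_commutes[OF QT A \<alpha>lin f, of x]
        teq2_tmul2(2)[OF A \<alpha>lin f flip\<Delta>x, of R] teq2_tmul2(1)[OF A \<alpha>lin f \<Delta>x, of R]
      by simp
    then have "\<alpha> x * f (x * ?u) = \<alpha> x * f (?u * x)"
      unfolding ev2_tmul2_left_slice[OF A f \<alpha>mult, where Y = "[(x, x)]" and R = R] by simp
    then show ?thesis using character_grouplike_nonzero[OF H \<alpha> x] by simp
  qed
  then show ?thesis
    using lin_separates_points A unfolding k_algebra_def by blast
qed

lemma left_slice_eq_one_imp_central: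
  assumes H: "hopf_algebra scale \<Delta> \<epsilon> S" and QT: "quasitriangular scale \<Delta> R"
    and \<alpha>: "character scale \<alpha>" and \<alpha>H\<^sub>o: "\<alpha> \<in> finite_dual scale"
    and u: "left_slice scale \<alpha> R = 1"
  shows "\<alpha> \<in> dual_center scale \<Delta>"
proof -
  have A: "k_algebra scale" by (rule hopf_algebra_k_algebra[OF H])
  have \<alpha>lin: "lin scale \<alpha>" and \<alpha>mult: "\<forall>x y. \<alpha> (x * y) = \<alpha> x * \<alpha> y"
    using \<alpha> unfolding character_def by blast+
  have "conv \<Delta> \<alpha> g h = conv \<Delta> g \<alpha> h" if g: "lin scale g" for g h
  proof -
    have "ev2 \<alpha> g (tmul2 (map (\<lambda>(a, b). (b, a)) (\<Delta> h)) R) = ev2 \<alpha> g (tmul2 R (\<Delta> h))"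
      by (rule quasitriangular_flip_commutes[OF QT A \<alpha>lin g])
    then have "ev2 \<alpha> g (map (\<lambda>(a, b). (b, a)) (\<Delta> h)) = ev2 \<alpha> g (\<Delta> h)"
      unfolding ev2_tmul2_left_slice[OF A g \<alpha>mult, where R = R] u by (simp add: ev2_eq_sum_list)
    then show ?thesis unfolding conv_def ev2_flip by simp
  qed
  then show ?thesis
    using \<alpha>H\<^sub>o unfolding dual_center_def finite_dual_def by auto
qed

lemma dual_grouplike_character:
  assumes "\<alpha> \<in> dual_grouplikes scale"
  shows "character scale \<alpha>"
proof -
  have lin: "lin scale \<alpha>" and mult: "\<forall>x y. \<alpha> (x * y) = \<alpha> x * \<alpha> y"
    using assms unfolding dual_grouplikes_def finite_dual_def by blast+
  obtain z where "\<alpha> z \<noteq> 0" using assms unfolding dual_grouplikes_def by fastforce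
  moreover have "\<alpha> z = \<alpha> z * \<alpha> 1" using mult by (metis mult_1_right)
  ultimately show ?thesis using lin mult unfolding character_def by simp
qed

theorem mainTheorem12:
  fixes scale :: "'k::field \<Rightarrow> 'h::ring_1 \<Rightarrow> 'h"
    and \<Delta> :: "'h \<Rightarrow> ('h \<times> 'h) list"
    and \<epsilon> :: "'h \<Rightarrow> 'k"
    and S :: "'h \<Rightarrow> 'h"
    and R :: "('h \<times> 'h) list"
  assumes "hopf_algebra scale \<Delta> \<epsilon> S"
    and "quasitriangular scale \<Delta> R"
  shows "card (dual_grouplikes scale) = 1 \<or>
         (card (dual_grouplikes scale) \<noteq> 1 \<and>
            dual_grouplikes scale \<inter> dual_center scale \<Delta> \<noteq> {\<epsilon>}) \<or>
         (card (dual_grouplikes scale) \<noteq> 1 \<and>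
            dual_grouplikes scale \<inter> dual_center scale \<Delta> = {\<epsilon>} \<and>
            grouplikes_center scale \<Delta> \<noteq> {1})"
proof (cases "card (dual_grouplikes scale) = 1 \<or>
    dual_grouplikes scale \<inter> dual_center scale \<Delta> \<noteq> {\<epsilon>}")
  case False
  then have card: "card (dual_grouplikes scale) \<noteq> 1"
    and center: "dual_grouplikes scale \<inter> dual_center scale \<Delta> = {\<epsilon>}" by auto
  then have "dual_grouplikes scale \<noteq> {\<epsilon>}" by auto
  then obtain \<alpha> where \<alpha>G: "\<alpha> \<in> dual_grouplikes scale" and "\<alpha> \<noteq> \<epsilon>"
    using center by blast
  then have \<alpha>: "character scale \<alpha>" and "\<alpha> \<notin> dual_center scale \<Delta>"
    using center dual_grouplike_character by auto
  then have "left_slice scale \<alpha> R \<noteq> 1"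
    using left_slice_eq_one_imp_central[OF assms \<alpha>] \<alpha>G unfolding dual_grouplikes_def by blast
  moreover have "left_slice scale \<alpha> R \<in> grouplikes_center scale \<Delta>"
    using left_slice_grouplike[OF assms \<alpha>] left_slice_commutes_grouplikes[OF assms \<alpha>]
    unfolding grouplikes_center_def by auto
  ultimately show ?thesis using card center by blast
qed blast

end
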